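(* Let $a,b,c,d\in\mathbb{Q}$ satisfy $a^4+b^4+c^4+d^4=(a+b+c+d)^4$, with at least three of $a,b,c,d$ non-zero, and let $t=\frac{c^2+cd+d^2}{(a+c+d)(b+c+d)}$. Then $t\neq 1$ and $$\frac{t+1}{t-1}=\frac{a^2+ab+b^2}{(c+a+b)(d+a+b)}.$$
   Context: A solution of $a^4+b^4+c^4+d^4=(a+b+c+d)^4$ is called non-trivial if at least three of $a,b,c,d$ are non-zero. For a non-trivial solution the denominators $(a+c+d)(b+c+d)$ and $(c+a+b)(d+a+b)$ are non-zero. *)

theory Defs
  imports Complex_Main
begin

end

theory Submission
  imports Defs
begin

text \<open>
  Write \<open>e\<^sub>2\<close> for the second elementary symmetric polynomial of \<open>a, b, c, d\<close>,
  \<open>N = c\<^sup>2 + cd + d\<^sup>2 + (a + c + d)(b + c + d)\<close> and \<open>P = (c + a + b)(d + a + b)\<close>.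
  Then \<open>t + 1 = N / ((a + c + d)(b + c + d))\<close> and \<open>t - 1 = -e\<^sub>2 / ((a + c + d)(b + c + d))\<close>,
  while \<open>(a + b + c + d)\<^sup>4 - a\<^sup>4 - b\<^sup>4 - c\<^sup>4 - d\<^sup>4 = 2 (N P + e\<^sub>2 (a\<^sup>2 + ab + b\<^sup>2))\<close>.
  So on a solution \<open>N / (-e\<^sub>2) = (a\<^sup>2 + ab + b\<^sup>2) / P\<close>, which is the claim.
  Non-triviality keeps all denominators non-zero: a vanishing sum of three of the
  variables forces those three to vanish, and \<open>e\<^sub>2 = 0\<close> forces all pairwise products
  \<open>a\<^sup>2b\<^sup>2, \<dots>\<close> to vanish, because then \<open>(a\<^sup>2 + b\<^sup>2 + c\<^sup>2 + d\<^sup>2)\<^sup>2 = a\<^sup>4 + b\<^sup>4 + c\<^sup>4 + d\<^sup>4\<close>.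
\<close>

lemma sum_fourth_powers_eq_0_iff:
  fixes x y z :: "'a::linordered_idom"
  shows "x^4 + y^4 + z^4 = 0 \<longleftrightarrow> x = 0 \<and> y = 0 \<and> z = 0"
proof
  assume sum: "x^4 + y^4 + z^4 = 0"
  have "x^4 \<ge> 0" "y^4 \<ge> 0" "z^4 \<ge> 0" by (simp_all add: zero_le_even_power)
  then have "x^4 = 0" "y^4 = 0" "z^4 = 0" using sum by linarith+
  then show "x = 0 \<and> y = 0 \<and> z = 0" by simp
qed simp

lemma quartic_solution_partial_sum_eq_0:
  fixes x y z w :: "'a::linordered_idom"
  assumes eq: "x^4 + y^4 + z^4 + w^4 = (x + y + z + w)^4"
    and sum: "x + y + z = 0"
  shows "x = 0 \<and> y = 0 \<and> z = 0"
proof -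
  have "x + y + z + w = w" using sum by simp
  with eq have "x^4 + y^4 + z^4 = 0" by simp
  then show ?thesis by (simp only: sum_fourth_powers_eq_0_iff)
qed

lemma quartic_solution_e2_eq_0:
  fixes a b c d :: "'a::linordered_idom"
  assumes eq: "a^4 + b^4 + c^4 + d^4 = (a + b + c + d)^4"
    and e2: "a*b + a*c + a*d + b*c + b*d + c*d = 0"
  shows "a*b = 0 \<and> a*c = 0 \<and> a*d = 0 \<and> b*c = 0 \<and> b*d = 0 \<and> c*d = 0"
proof -
  have "(a + b + c + d)^4 = ((a + b + c + d)^2)^2"
    by simp
  also have "\<dots> = (a^2 + b^2 + c^2 + d^2 + 2*(a*b + a*c + a*d + b*c + b*d + c*d))^2"
    by algebra
  finally have "(a + b + c + d)^4 = (a^2 + b^2 + c^2 + d^2)^2"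
    using e2 by simp
  with eq have pairs: "(a*b)^2 + (a*c)^2 + (a*d)^2 + (b*c)^2 + (b*d)^2 + (c*d)^2 = 0"
    by algebra
  have "(a*b)^2 \<ge> 0" "(a*c)^2 \<ge> 0" "(a*d)^2 \<ge> 0" "(b*c)^2 \<ge> 0" "(b*d)^2 \<ge> 0" "(c*d)^2 \<ge> 0"
    by simp_all
  then have "(a*b)^2 = 0" "(a*c)^2 = 0" "(a*d)^2 = 0" "(b*c)^2 = 0" "(b*d)^2 = 0" "(c*d)^2 = 0"
    using pairs by linarith+
  then show ?thesis by simp
qed

lemma quartic_defect_identity:
  fixes a b c d :: "'a::comm_ring_1"
  shows "(a + b + c + d)^4 - (a^4 + b^4 + c^4 + d^4)
    = 2 * ((c^2 + c*d + d^2 + (a + c + d) * (b + c + d)) * ((c + a + b) * (d + a + b))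
           + (a*b + a*c + a*d + b*c + b*d + c*d) * (a^2 + a*b + b^2))"
  by (simp add: algebra_simps power_numeral_reduce numeral_eq_Suc)

lemma quartic_solution_denominators_ne_0:
  fixes a b c d :: "'a::linordered_idom"
  assumes eq: "a^4 + b^4 + c^4 + d^4 = (a + b + c + d)^4"
    and nontriv: "length (filter (\<lambda>x. x \<noteq> 0) [a, b, c, d]) \<ge> 3"
  shows "(a + c + d) * (b + c + d) \<noteq> 0" "(c + a + b) * (d + a + b) \<noteq> 0"
    and "a*b + a*c + a*d + b*c + b*d + c*d \<noteq> 0"
proof -
  have no_three_zero: "\<not> (a = 0 \<and> c = 0 \<and> d = 0)" "\<not> (b = 0 \<and> c = 0 \<and> d = 0)"
    "\<not> (c = 0 \<and> a = 0 \<and> b = 0)" "\<not> (d = 0 \<and> a = 0 \<and> b = 0)"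
    using nontriv by (auto split: if_splits)
  show "(a + c + d) * (b + c + d) \<noteq> 0"
    using quartic_solution_partial_sum_eq_0[of a c d b] quartic_solution_partial_sum_eq_0[of b c d a]
      eq no_three_zero by (auto simp: ac_simps)
  show "(c + a + b) * (d + a + b) \<noteq> 0"
    using quartic_solution_partial_sum_eq_0[of c a b d] quartic_solution_partial_sum_eq_0[of d a b c]
      eq no_three_zero by (auto simp: ac_simps)
  show "a*b + a*c + a*d + b*c + b*d + c*d \<noteq> 0"
    using quartic_solution_e2_eq_0[OF eq] nontriv by (auto split: if_splits)
qed

lemma quartic_solution_cross_ratio:
  fixes a b c d t :: "'a::field_char_0"
  assumes eq: "a^4 + b^4 + c^4 + d^4 = (a + b + c + d)^4"
    and D_ne_0: "(a + c + d) * (b + c + d) \<noteq> 0"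
    and P_ne_0: "(c + a + b) * (d + a + b) \<noteq> 0"
    and e_ne_0: "a*b + a*c + a*d + b*c + b*d + c*d \<noteq> 0"
    and t_def: "t = (c^2 + c*d + d^2) / ((a + c + d) * (b + c + d))"
  shows "t \<noteq> 1 \<and> (t + 1) / (t - 1) = (a^2 + a*b + b^2) / ((c + a + b) * (d + a + b))"
proof -
  define D where "D = (a + c + d) * (b + c + d)"
  define P where "P = (c + a + b) * (d + a + b)"
  define e where "e = a*b + a*c + a*d + b*c + b*d + c*d"
  define N where "N = c^2 + c*d + d^2 + D"
  define Q where "Q = a^2 + a*b + b^2"
  have "D \<noteq> 0" "P \<noteq> 0" "e \<noteq> 0"
    using D_ne_0 P_ne_0 e_ne_0 by (simp_all add: D_def P_def e_def)
  have t: "t = (c^2 + c*d + d^2) / D"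
    by (simp add: t_def D_def)
  have t_minus: "t - 1 = - e / D"
  proof -
    have "t - 1 = (c^2 + c*d + d^2 - D) / D"
      using \<open>D \<noteq> 0\<close> by (simp add: t diff_divide_distrib)
    also have "c^2 + c*d + d^2 - D = - e"
      unfolding D_def e_def by algebra
    finally show ?thesis .
  qed
  have t_plus: "t + 1 = N / D"
    using \<open>D \<noteq> 0\<close> by (simp add: t N_def add_divide_distrib)
  have "2 * (N * P + e * Q) = 0"
    using quartic_defect_identity[of a b c d] eq by (simp add: N_def D_def P_def e_def Q_def)
  then have "N * P + e * Q = 0"
    by (metis mult_eq_0_iff zero_neq_numeral)
  then have "N / - e = Q / P"
    using \<open>P \<noteq> 0\<close> \<open>e \<noteq> 0\<close> by (simp add: field_simps add_eq_0_iff2)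
  moreover have "(t + 1) / (t - 1) = N / - e"
    using t_minus t_plus \<open>D \<noteq> 0\<close> by simp
  moreover have "t \<noteq> 1"
    using t_minus \<open>D \<noteq> 0\<close> \<open>e \<noteq> 0\<close> by auto
  ultimately show ?thesis
    by (simp add: P_def Q_def)
qed

theorem mainTheorem2:
  fixes a b c d t :: rat
  assumes eq: "a^4 + b^4 + c^4 + d^4 = (a + b + c + d)^4"
    and nontriv: "length (filter (\<lambda>x. x \<noteq> 0) [a, b, c, d]) \<ge> 3"
    and t_def: "t = (c^2 + c*d + d^2) / ((a + c + d) * (b + c + d))"
  shows "t \<noteq> 1 \<and> (t + 1) / (t - 1) = (a^2 + a*b + b^2) / ((c + a + b) * (d + a + b))"
  using quartic_solution_cross_ratio[OF eq quartic_solution_denominators_ne_0[OF eq nontriv] t_def] .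

end
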